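(* In the setup described in the context, assume the Levi-Civita connection $\nabla$ of $g$ is locally flat ($R=0$). Let $x\in T_pM$ induce a $Q$-basis, and let $\psi=\angle(x,Q^2x)$ be the $g$-angle, with $\psi\neq\pi/2$. Then $$\tilde r(x)=\tilde r(Qx)=\tilde r(Q^2x)=\tilde r(Q^3x)=\frac{1}{8\cos\psi}(3\tilde\tau^*+\tilde\tau)+\frac18(3\tilde\tau+\tilde\tau^* ).$$
   Context: Let $M$ be a 3-dimensional smooth manifold. Fix a coordinate chart $(x^1,x^2,x^3)$ with coordinate vector fields $\partial_i$. Structures: - $g$ is a Riemannian metric with $g(\partial_1,\partial_1)=g(\partial_2,\partial_2)=A$, $g(\partial_3,\partial_3)=B$ and $g(\partial_i,\partial_j)=0$ for $i\ne j$. Here $A,B$ are smooth positive functions. - $Q$ is the $(1,1)$-tensor field with $Q\partial_1=\partial_2$, $Q\partial_2=-\partial_1$, $Q\partial_3=\partial_3$. - $P=Q^2$ and $\tilde g(x,y)=g(x,Py)$. Curvature: - $\nabla$ and $\tilde\nabla$ are the Levi-Civita connections of $g$ and $\tilde g$, with curvatures $R$ and $\tilde R$ defined by $R(x,y)z=\nabla_x\nabla_yz-\nabla_y\nabla_xz-\nabla_{[x,y]}z$ (similarly for $\tilde R$). - $\tilde R(x,y,z,t)=\tilde g(\tilde R(x,y)z,t)$. - $\tilde\rho(y,z)=\tilde g^{ij}\tilde R(e_i,y,z,e_j)$, $\tilde\tau=\tilde g^{ij}\tilde\rho_{ij}$ and $\tilde\tau^*=g^{ij}\tilde\rho_{ij}$.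 - $\tilde r(x)=\tilde\rho(x,x)/\tilde g(x,x)$. Angles and $Q$-bases: - The $g$-angle is defined by $\cos\angle(u,v)=g(u,v)/\sqrt{g(u,u)g(v,v)}$. - A vector $x$ induces a $Q$-basis if $\{x,Qx,Q^2x\}$ is a basis of $T_pM$. *)

theory Defs
  imports "HOL-Analysis.Analysis"
begin

text \<open>Coordinates: a chart domain U in real^3; the coordinate indices x^1,x^2,x^3
  are represented by the elements 0,1,2 of the index type 3; the coordinate
  vector field d_i at a point is axis i 1. Tensor fields are given by their
  components in the coordinate frame.\<close>

type_synonym cfield = "real^3 \<Rightarrow> 3 \<Rightarrow> 3 \<Rightarrow> real"

definition pd :: "3 \<Rightarrow> (real^3 \<Rightarrow> real) \<Rightarrow> real^3 \<Rightarrow> real" where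
  "pd i f p = deriv (\<lambda>t. f (p + t *\<^sub>R axis i 1)) 0"

definition smooth_on :: "(real^3) set \<Rightarrow> (real^3 \<Rightarrow> real) \<Rightarrow> bool" where
  "smooth_on U f \<longleftrightarrow> (\<forall>js :: 3 list. continuous_on U (foldr pd js f) \<and>
     (\<forall>i. \<forall>p\<in>U. (\<lambda>t. foldr pd js f (p + t *\<^sub>R axis i 1)) differentiable (at 0)))"

definition metric_g :: "(real^3 \<Rightarrow> real) \<Rightarrow> (real^3 \<Rightarrow> real) \<Rightarrow> cfield" where
  "metric_g A B p i j = (if i = j then (if i = 2 then B p else A p) else 0)"

definition Qc :: "3 \<Rightarrow> 3 \<Rightarrow> real" where
  "Qc k i = (if i = 0 \<and> k = 1 then 1 else if i = 1 \<and> k = 0 then -1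
             else if i = 2 \<and> k = 2 then 1 else 0)"

definition Qop :: "real^3 \<Rightarrow> real^3" where
  "Qop x = (\<chi> k. \<Sum>i\<in>UNIV. Qc k i * x $ i)"

definition Pc :: "3 \<Rightarrow> 3 \<Rightarrow> real" where
  "Pc k i = (\<Sum>m\<in>UNIV. Qc k m * Qc m i)"

definition tmetric :: "cfield \<Rightarrow> cfield" where
  "tmetric G p i j = (\<Sum>k\<in>UNIV. Pc k j * G p i k)"

definition ginv :: "cfield \<Rightarrow> cfield" where
  "ginv G p i j = matrix_inv (\<chi> a b. G p a b) $ i $ j"

definition bil :: "cfield \<Rightarrow> real^3 \<Rightarrow> real^3 \<Rightarrow> real^3 \<Rightarrow> real" where
  "bil G p x y = (\<Sum>i\<in>UNIV. \<Sum>j\<in>UNIV. x $ i * y $ j * G p i j)"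

text \<open>Christoffel symbols of the Levi-Civita connection: Chr G p i j k = Gamma^k_{ij},
  nabla_{d_i} d_j = sum_k Gamma^k_{ij} d_k.\<close>
definition Chr :: "cfield \<Rightarrow> real^3 \<Rightarrow> 3 \<Rightarrow> 3 \<Rightarrow> 3 \<Rightarrow> real" where
  "Chr G p i j k = (1/2) * (\<Sum>l\<in>UNIV. ginv G p k l *
      (pd i (\<lambda>q. G q j l) p + pd j (\<lambda>q. G q i l) p - pd l (\<lambda>q. G q i j) p))"

text \<open>R(d_i,d_j)d_k = sum_l Riem G p i j k l d_l, with
  R(x,y)z = nabla_x nabla_y z - nabla_y nabla_x z - nabla_[x,y] z.\<close>
definition Riem :: "cfield \<Rightarrow> real^3 \<Rightarrow> 3 \<Rightarrow> 3 \<Rightarrow> 3 \<Rightarrow> 3 \<Rightarrow> real" where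
  "Riem G p i j k l =
     pd i (\<lambda>q. Chr G q j k l) p - pd j (\<lambda>q. Chr G q i k l) p
     + (\<Sum>m\<in>UNIV. Chr G p j k m * Chr G p i m l - Chr G p i k m * Chr G p j m l)"

definition Riem4 :: "cfield \<Rightarrow> real^3 \<Rightarrow> real^3 \<Rightarrow> real^3 \<Rightarrow> real^3 \<Rightarrow> real^3 \<Rightarrow> real" where
  "Riem4 G p x y z t = (\<Sum>i\<in>UNIV. \<Sum>j\<in>UNIV. \<Sum>k\<in>UNIV. \<Sum>l\<in>UNIV. \<Sum>m\<in>UNIV.
      x $ i * y $ j * z $ k * t $ m * Riem G p i j k l * G p l m)"

definition ricci :: "cfield \<Rightarrow> real^3 \<Rightarrow> real^3 \<Rightarrow> real^3 \<Rightarrow> real" where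
  "ricci G p y z = (\<Sum>i\<in>UNIV. \<Sum>j\<in>UNIV. ginv G p i j * Riem4 G p (axis i 1) y z (axis j 1))"

definition scal :: "cfield \<Rightarrow> real^3 \<Rightarrow> real" where
  "scal G p = (\<Sum>i\<in>UNIV. \<Sum>j\<in>UNIV. ginv G p i j * ricci G p (axis i 1) (axis j 1))"

definition scal_star :: "cfield \<Rightarrow> cfield \<Rightarrow> real^3 \<Rightarrow> real" where
  "scal_star G H p = (\<Sum>i\<in>UNIV. \<Sum>j\<in>UNIV. ginv H p i j * ricci G p (axis i 1) (axis j 1))"

definition rfun :: "cfield \<Rightarrow> real^3 \<Rightarrow> real^3 \<Rightarrow> real" where
  "rfun G p x = ricci G p x x / bil G p x x"

definition g_angle :: "cfield \<Rightarrow> real^3 \<Rightarrow> real^3 \<Rightarrow> real^3 \<Rightarrow> real" where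
  "g_angle G p u v = arccos (bil G p u v / sqrt (bil G p u u * bil G p v v))"

definition Q_basis :: "real^3 \<Rightarrow> bool" where
  "Q_basis x \<longleftrightarrow> card {x, Qop x, Qop (Qop x)} = 3 \<and> independent {x, Qop x, Qop (Qop x)}
      \<and> span {x, Qop x, Qop (Qop x)} = UNIV"

end

theory Submission
  imports Defs
begin

text \<open>Since P = Q^2 is -1 on the span of d_1, d_2 and 1 on d_3, the metric g~ is the
  diagonal metric with A replaced by -A. Under this substitution the Christoffel symbols of a
  diagonal metric only change sign, so the Ricci tensor of g~ differs from the (vanishing)
  Ricci tensor of g only on the diagonal and has the form
  alpha (y_1 z_1 + y_2 z_2) + gamma y_3 z_3. Then r~(x) and cos psi = g~(x,x) / g(x,x)
  are explicit in x_1^2 + x_2^2 and x_3^2, which Q preserves, and the identity is algebra.\<close>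

lemma UNIV_3': "(UNIV :: 3 set) = {0, 1, 2}"
proof -
  have "(3::3) = 0" by simp
  then show ?thesis using UNIV_3 by (simp only:) (auto simp: insert_commute)
qed

lemma forall_3': "(\<forall>i::3. P i) \<longleftrightarrow> P 0 \<and> P 1 \<and> P 2"
  by (metis UNIV_3' UNIV_I insertE singletonD)

lemma sum_3': "sum f (UNIV :: 3 set) = f 0 + f 1 + f 2"
  unfolding UNIV_3' by (simp add: add.assoc)

lemma times_if_zero:
  "(if P then a else 0) * b = (if P then a * b else (0::real))"
  "b * (if P then a else 0) = (if P then b * a else (0::real))"
  by simp_all

lemma sum_if_zero: "(\<Sum>x\<in>S. if P then f x else 0) = (if P then sum f S else (0::real))"
  by simp

lemma axis_nth: "axis i (1::real) $ j = (if j = i then 1 else 0)"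
  by (simp add: axis_def)

lemma pd_const [simp]: "pd i (\<lambda>q. c) p = 0"
  by (simp add: pd_def)

lemma eventually_line_in_open:
  fixes p :: "real^3" and i :: 3
  assumes "open U" "p \<in> U"
  shows "\<forall>\<^sub>F t in nhds 0. p + t *\<^sub>R axis i 1 \<in> U"
proof -
  have "open ((\<lambda>t::real. p + t *\<^sub>R axis i 1) -` U)"
    by (rule open_vimage[OF assms(1)]) (intro continuous_intros)
  then show ?thesis
    unfolding eventually_nhds using assms(2) by auto
qed

lemma pd_cong_open:
  assumes "open U" "p \<in> U" "\<forall>q\<in>U. f q = g q"
  shows "pd i f p = pd i g p"
  unfolding pd_def
  by (rule deriv_cong_ev[OF eventually_mono[OF eventually_line_in_open[OF assms(1,2)]] refl])
    (use assms(3) in blast)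

lemma line_differentiable_cong_open:
  fixes p :: "real^3" and i :: 3
  assumes "open U" "p \<in> U" "\<forall>q\<in>U. f q = g q"
    and "(\<lambda>t. g (p + t *\<^sub>R axis i 1)) differentiable (at 0)"
  shows "(\<lambda>t. f (p + t *\<^sub>R axis i 1)) differentiable (at 0)"
proof -
  obtain D where "((\<lambda>t. g (p + t *\<^sub>R axis i 1)) has_derivative D) (at 0)"
    using assms(4) unfolding differentiable_def by blast
  moreover have "\<forall>\<^sub>F t in at 0. g (p + t *\<^sub>R axis i 1) = f (p + t *\<^sub>R axis i 1)"
    using eventually_line_in_open[OF assms(1,2), of i] assms(3)
    by (auto simp: eventually_at_filter elim: eventually_mono)
  ultimately have "((\<lambda>t. f (p + t *\<^sub>R axis i 1)) has_derivative D) (at 0)"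
    by (rule has_derivative_transform_eventually) (use assms(2,3) in auto)
  then show ?thesis unfolding differentiable_def by blast
qed

lemma pd_cmult_open:
  assumes "open U" "p \<in> U" "\<forall>q\<in>U. g q = c * f q"
    and "(\<lambda>t. f (p + t *\<^sub>R axis i 1)) differentiable (at 0)"
  shows "pd i g p = c * pd i f p"
proof -
  have "pd i g p = pd i (\<lambda>q. c * f q) p"
    by (rule pd_cong_open[OF assms(1-3)])
  also have "\<dots> = c * pd i f p"
    unfolding pd_def using assms(4)
    by (simp add: real_differentiable_def field_differentiable_def)
  finally show ?thesis .
qed

lemma smooth_on_zero: "smooth_on U (\<lambda>q. 0)"
proof -
  have "foldr pd js (\<lambda>q. 0) = (\<lambda>q. 0)" for js :: "3 list"
    by (induction js) (simp_all add: pd_def)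
  then show ?thesis unfolding smooth_on_def by simp
qed

lemma smooth_on_line_differentiable:
  assumes "smooth_on U f" "q \<in> U"
  shows "(\<lambda>t. f (q + t *\<^sub>R axis i 1)) differentiable (at 0)"
  using assms unfolding smooth_on_def by (metis foldr.simps(1) id_apply)

lemma smooth_on_pd_line_differentiable:
  assumes "smooth_on U f" "q \<in> U"
  shows "(\<lambda>t. pd k f (q + t *\<^sub>R axis i 1)) differentiable (at 0)"
proof -
  have "(\<lambda>t. foldr pd [k] f (q + t *\<^sub>R axis i 1)) differentiable (at 0)"
    using assms unfolding smooth_on_def by blast
  then show ?thesis by simp
qed

lemma pd_uminus_smooth_on:
  assumes "smooth_on U f" "q \<in> U"
  shows "pd i (\<lambda>q. - f q) q = - pd i f q"
  unfolding pd_def using smooth_on_line_differentiable[OF assms]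
  by (simp add: real_differentiable_def field_differentiable_def)

lemma metric_g_component:
  "(\<lambda>q. metric_g A B q j k) = (if j = k then (if j = 2 then B else A) else (\<lambda>q. 0))"
  by (auto simp: metric_g_def)

lemma smooth_on_metric_g:
  assumes "smooth_on U A" "smooth_on U B"
  shows "smooth_on U (\<lambda>q. metric_g A B q j k)"
  unfolding metric_g_component using assms smooth_on_zero by simp

lemma pd_metric_g:
  "pd i (\<lambda>q. metric_g A B q j k) q = (if j = k then (if j = 2 then pd i B q else pd i A q) else 0)"
  unfolding metric_g_component by simp

lemma Pc_eq: "Pc k j = (if k = j then (if j = 2 then 1 else -1) else 0)"
proof -
  have "\<forall>k j. Pc k j = (if k = j then (if j = 2 then 1 else -1) else 0)"
    unfolding forall_3' by (simp add: Pc_def sum_3' Qc_def)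
  then show ?thesis by blast
qed

lemma tmetric_metric_g: "tmetric (metric_g A B) = metric_g (\<lambda>q. - A q) B"
proof (intro ext)
  fix p i j
  have "\<forall>i j. tmetric (metric_g A B) p i j = metric_g (\<lambda>q. - A q) B p i j"
    unfolding forall_3' by (simp add: tmetric_def sum_3' Pc_eq metric_g_def)
  then show "tmetric (metric_g A B) p i j = metric_g (\<lambda>q. - A q) B p i j" by blast
qed

lemma ginv_metric_g:
  assumes "A q \<noteq> 0" "B q \<noteq> 0"
  shows "ginv (metric_g A B) q i j = (if i = j then 1 / metric_g A B q i i else 0)"
proof -
  define M where "M = (\<chi> a b. metric_g A B q a b)"
  define D where "D = (\<chi> a b. if a = b then 1 / metric_g A B q a a else (0::real))"
  have MD: "M ** D = mat 1" "D ** M = mat 1"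
    unfolding M_def D_def vec_eq_iff matrix_matrix_mult_def mat_def
    using assms unfolding forall_3' by (simp_all add: sum_3' metric_g_def)
  have "matrix_inv M = D"
    unfolding matrix_inv_def
  proof (rule someI2[where a = D])
    fix X assume "M ** X = mat 1 \<and> X ** M = mat 1"
    then have "X = X ** (M ** D)" "X ** M = mat 1" using MD by (simp_all add: matrix_mul_rid)
    then show "X = D" by (metis matrix_mul_assoc matrix_mul_lid)
  qed (use MD in simp)
  then show ?thesis unfolding ginv_def M_def[symmetric] D_def by simp
qed

lemma Chr_metric_g:
  assumes "A q \<noteq> 0" "B q \<noteq> 0"
  shows "Chr (metric_g A B) q i j k = (pd i (\<lambda>q. metric_g A B q j k) q
      + pd j (\<lambda>q. metric_g A B q i k) q - pd k (\<lambda>q. metric_g A B q i j) q) / (2 * metric_g A B q k k)"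
  unfolding Chr_def ginv_metric_g[where A = A and B = B and q = q, OF assms] times_if_zero
  by (simp add: sum.delta)

lemma Chr_metric_g_line_differentiable:
  assumes "open U" "p \<in> U" "\<forall>q\<in>U. A q \<noteq> 0 \<and> B q \<noteq> 0" "smooth_on U A" "smooth_on U B"
  shows "(\<lambda>t. Chr (metric_g A B) (p + t *\<^sub>R axis i 1) j k l) differentiable (at 0)"
proof (rule line_differentiable_cong_open[OF assms(1,2)])
  let ?G = "\<lambda>a b q. metric_g A B q a b"
  show "\<forall>q\<in>U. Chr (metric_g A B) q j k l =
      (pd j (?G k l) q + pd k (?G j l) q - pd l (?G j k) q) / (2 * ?G l l q)"
    using assms(3) Chr_metric_g by blast
  have "?G l l p \<noteq> 0" using assms(2,3) by (simp add: metric_g_def)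
  then show "(\<lambda>t. (pd j (?G k l) (p + t *\<^sub>R axis i 1) + pd k (?G j l) (p + t *\<^sub>R axis i 1)
      - pd l (?G j k) (p + t *\<^sub>R axis i 1)) / (2 * ?G l l (p + t *\<^sub>R axis i 1))) differentiable (at 0)"
    using assms(2) smooth_on_metric_g[OF assms(4,5)]
    by (intro differentiable_divide differentiable_diff differentiable_add differentiable_mult
        differentiable_const smooth_on_pd_line_differentiable smooth_on_line_differentiable) auto
qed

text \<open>The sign by which Gamma^k_ij changes when A is replaced by -A: only the symbols
  Gamma^k_ii = - d_k g_ii / 2 g_kk with exactly one of i, k the index 2 of the x^3 direction
  involve both A and B.\<close>
definition Chr_sign :: "3 \<Rightarrow> 3 \<Rightarrow> 3 \<Rightarrow> real" where
  "Chr_sign i j k = (if i = j \<and> ((i = 2) \<noteq> (k = 2)) then -1 else 1)"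

lemma Chr_metric_g_uminus:
  assumes "A q \<noteq> 0" "B q \<noteq> 0" "\<And>i. pd i (\<lambda>q. - A q) q = - pd i A q"
  shows "Chr (metric_g (\<lambda>q. - A q) B) q i j k = Chr_sign i j k * Chr (metric_g A B) q i j k"
proof -
  have nA: "- A q \<noteq> 0" using assms by simp
  have "\<forall>i j k. Chr (metric_g (\<lambda>q. - A q) B) q i j k = Chr_sign i j k * Chr (metric_g A B) q i j k"
    unfolding Chr_metric_g[where A = A and B = B and q = q, OF assms(1,2)]
      Chr_metric_g[where A = "\<lambda>q. - A q" and B = B and q = q, OF nA assms(2)] pd_metric_g
    unfolding forall_3' using assms by (simp add: metric_g_def Chr_sign_def)
  then show ?thesis by blast
qed

lemma pd_Chr_metric_g_uminus:
  assumes "open U" "p \<in> U" "\<forall>q\<in>U. A q \<noteq> 0 \<and> B q \<noteq> 0" "smooth_on U A" "smooth_on U B"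
  shows "pd i (\<lambda>q. Chr (metric_g (\<lambda>q. - A q) B) q j k l) p
    = Chr_sign j k l * pd i (\<lambda>q. Chr (metric_g A B) q j k l) p"
proof (rule pd_cmult_open[OF assms(1,2)])
  show "\<forall>q\<in>U. Chr (metric_g (\<lambda>q. - A q) B) q j k l = Chr_sign j k l * Chr (metric_g A B) q j k l"
    using assms(3) pd_uminus_smooth_on[OF assms(4)] by (auto intro!: Chr_metric_g_uminus)
qed (rule Chr_metric_g_line_differentiable[OF assms])

definition ricci_comp :: "cfield \<Rightarrow> real^3 \<Rightarrow> 3 \<Rightarrow> 3 \<Rightarrow> real" where
  "ricci_comp G p a b = (\<Sum>i\<in>UNIV. Riem G p i a b i)"

lemma ricci_metric_g:
  assumes "A q \<noteq> 0" "B q \<noteq> 0"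
  shows "ricci (metric_g A B) q y z = (\<Sum>a\<in>UNIV. \<Sum>b\<in>UNIV. y $ a * z $ b * ricci_comp (metric_g A B) q a b)"
proof -
  let ?R = "Riem (metric_g A B) q"
  have gii: "metric_g A B q i i \<noteq> 0" for i using assms by (simp add: metric_g_def)
  have "Riem4 (metric_g A B) q (axis i 1) y z (axis j 1) =
     (\<Sum>a\<in>UNIV. \<Sum>b\<in>UNIV. \<Sum>l\<in>UNIV. y $ a * z $ b * ?R i a b l * metric_g A B q l j)" for i j
    unfolding Riem4_def axis_nth times_if_zero by (simp add: sum_if_zero sum.delta')
  moreover have "(\<Sum>l\<in>UNIV. c * ?R i a b l * metric_g A B q l i) = c * ?R i a b i * metric_g A B q i i"
    for c i a b
    by (simp add: metric_g_def times_if_zero sum.delta' cong: if_cong)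
  ultimately have "ricci (metric_g A B) q y z
      = (\<Sum>i\<in>UNIV. \<Sum>a\<in>UNIV. \<Sum>b\<in>UNIV. y $ a * z $ b * ?R i a b i)"
    unfolding ricci_def ginv_metric_g[where A = A and B = B and q = q, OF assms] times_if_zero
    using gii by (simp add: sum.delta' sum_distrib_left)
  also have "\<dots> = (\<Sum>a\<in>UNIV. \<Sum>i\<in>UNIV. \<Sum>b\<in>UNIV. y $ a * z $ b * ?R i a b i)"
    by (rule sum.swap)
  also have "\<dots> = (\<Sum>a\<in>UNIV. \<Sum>b\<in>UNIV. \<Sum>i\<in>UNIV. y $ a * z $ b * ?R i a b i)"
    by (rule sum.cong[OF refl], rule sum.swap)
  finally show ?thesis
    by (simp add: ricci_comp_def sum_distrib_left)
qed

lemma ricci_comp_metric_g_uminus: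
  assumes "open U" "p \<in> U" "\<forall>q\<in>U. A q \<noteq> 0 \<and> B q \<noteq> 0" "smooth_on U A" "smooth_on U B"
  shows "a \<noteq> b \<Longrightarrow> ricci_comp (metric_g (\<lambda>q. - A q) B) p a b = ricci_comp (metric_g A B) p a b"
    and "ricci_comp (metric_g (\<lambda>q. - A q) B) p 0 0 - ricci_comp (metric_g (\<lambda>q. - A q) B) p 1 1
      = ricci_comp (metric_g A B) p 0 0 - ricci_comp (metric_g A B) p 1 1"
proof -
  have nz: "A p \<noteq> 0" "B p \<noteq> 0" using assms(2,3) by auto
  note Chr_p = Chr_metric_g[where A = A and B = B and q = p, OF nz]
  note Chr_uminus_p =
    Chr_metric_g_uminus[where A = A and B = B and q = p, OF nz pd_uminus_smooth_on[OF assms(4,2)]]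
  note pd_Chr_uminus = pd_Chr_metric_g_uminus[OF assms]
  \<comment> \<open>Gamma^2_00 = Gamma^2_11 on U; this cancels the sign changes in rho_00 - rho_11.\<close>
  have "\<forall>q\<in>U. Chr (metric_g A B) q 0 0 2 = Chr (metric_g A B) q 1 1 2"
    using assms(3) by (simp add: Chr_metric_g pd_metric_g metric_g_def)
  then have pd_Chr_002:
      "pd 2 (\<lambda>q. Chr (metric_g A B) q 0 0 2) p = pd 2 (\<lambda>q. Chr (metric_g A B) q 1 1 2) p"
    by (rule pd_cong_open[OF assms(1,2)])
  have "\<forall>a b. a \<noteq> b \<longrightarrow> ricci_comp (metric_g (\<lambda>q. - A q) B) p a b = ricci_comp (metric_g A B) p a b"
    unfolding forall_3' ricci_comp_def Riem_def sum_3' pd_Chr_uminus Chr_uminus_p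
    using nz by (simp add: Chr_p pd_metric_g metric_g_def Chr_sign_def field_simps)
  then show "a \<noteq> b \<Longrightarrow> ricci_comp (metric_g (\<lambda>q. - A q) B) p a b = ricci_comp (metric_g A B) p a b"
    by blast
  show "ricci_comp (metric_g (\<lambda>q. - A q) B) p 0 0 - ricci_comp (metric_g (\<lambda>q. - A q) B) p 1 1
      = ricci_comp (metric_g A B) p 0 0 - ricci_comp (metric_g A B) p 1 1"
    unfolding ricci_comp_def Riem_def sum_3' pd_Chr_uminus Chr_uminus_p
    using nz pd_Chr_002 by (simp add: Chr_p pd_metric_g metric_g_def Chr_sign_def field_simps)
qed

lemma ricci_tmetric_metric_g:
  assumes "open U" "p \<in> U" "\<forall>q\<in>U. A q \<noteq> 0 \<and> B q \<noteq> 0" "smooth_on U A" "smooth_on U B"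
    and flat: "\<forall>i j k l. Riem (metric_g A B) p i j k l = 0"
  shows "ricci (tmetric (metric_g A B)) p y z
    = ricci_comp (tmetric (metric_g A B)) p 0 0 * (y $ 0 * z $ 0 + y $ 1 * z $ 1)
      + ricci_comp (tmetric (metric_g A B)) p 2 2 * (y $ 2 * z $ 2)"
proof -
  let ?\<rho> = "ricci_comp (metric_g (\<lambda>q. - A q) B) p"
  have nz: "- A p \<noteq> 0" "B p \<noteq> 0" using assms(2,3) by auto
  have flat_ricci: "ricci_comp (metric_g A B) p a b = 0" for a b
    using flat by (simp add: ricci_comp_def)
  have "?\<rho> a b = 0" if "a \<noteq> b" for a b
    using ricci_comp_metric_g_uminus(1)[OF assms(1-5) that] flat_ricci by simp
  moreover have "?\<rho> 1 1 = ?\<rho> 0 0"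
    using ricci_comp_metric_g_uminus(2)[OF assms(1-5)] flat_ricci by simp
  ultimately show ?thesis
    unfolding tmetric_metric_g ricci_metric_g[where A = "\<lambda>q. - A q" and B = B and q = p, OF nz] sum_3'
    by (simp add: algebra_simps)
qed

lemma scal_eq_scal_star: "scal G p = scal_star G G p"
  by (simp add: scal_def scal_star_def)

lemma scal_star_metric_g:
  assumes "A p \<noteq> 0" "B p \<noteq> 0"
    and "\<And>y z. ricci G p y z = \<alpha> * (y $ 0 * z $ 0 + y $ 1 * z $ 1) + \<gamma> * (y $ 2 * z $ 2)"
  shows "scal_star G (metric_g A B) p = 2 * \<alpha> / A p + \<gamma> / B p"
  unfolding scal_star_def ginv_metric_g[where A = A and B = B and q = p, OF assms(1,2)] assms(3)
  by (simp add: sum_3' axis_nth metric_g_def field_simps)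

lemma Qop_nth: "Qop x $ 0 = - x $ 1" "Qop x $ 1 = x $ 0" "Qop x $ 2 = x $ 2"
  by (simp_all add: Qop_def sum_3' Qc_def)

lemma bil_metric_g:
  "bil (metric_g A B) p x y = A p * (x $ 0 * y $ 0 + x $ 1 * y $ 1) + B p * (x $ 2 * y $ 2)"
  by (simp add: bil_def sum_3' metric_g_def algebra_simps)

lemma bil_tmetric: "bil (tmetric G) p x y = bil G p x (Qop (Qop y))"
  by (simp add: bil_def tmetric_def sum_3' Pc_eq Qop_nth algebra_simps)

lemma rfun_metric_g:
  assumes "\<And>y z. ricci (metric_g A B) p y z = \<alpha> * (y $ 0 * z $ 0 + y $ 1 * z $ 1) + \<gamma> * (y $ 2 * z $ 2)"
  shows "rfun (metric_g A B) p x = (\<alpha> * ((x $ 0)\<^sup>2 + (x $ 1)\<^sup>2) + \<gamma> * (x $ 2)\<^sup>2)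
    / (A p * ((x $ 0)\<^sup>2 + (x $ 1)\<^sup>2) + B p * (x $ 2)\<^sup>2)"
  unfolding rfun_def assms bil_metric_g by (simp add: power2_eq_square)

lemma rfun_metric_g_Qop:
  assumes "\<And>y z. ricci (metric_g A B) p y z = \<alpha> * (y $ 0 * z $ 0 + y $ 1 * z $ 1) + \<gamma> * (y $ 2 * z $ 2)"
  shows "rfun (metric_g A B) p (Qop x) = rfun (metric_g A B) p x"
  unfolding rfun_metric_g[OF assms] by (simp add: Qop_nth algebra_simps)

lemma bil_ne_zero_if_g_angle_ne_pi_half:
  assumes "g_angle G p u v \<noteq> pi / 2"
  shows "bil G p u v \<noteq> 0"
  using assms by (auto simp: g_angle_def)

lemma cos_g_angle_Qop2:
  assumes "A p > 0" "B p > 0"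
  shows "cos (g_angle (metric_g A B) p x (Qop (Qop x)))
    = bil (tmetric (metric_g A B)) p x x / bil (metric_g A B) p x x"
proof -
  let ?S = "bil (metric_g A B) p x x" and ?D = "bil (tmetric (metric_g A B)) p x x"
  have S_Qop2: "bil (metric_g A B) p (Qop (Qop x)) (Qop (Qop x)) = ?S"
    by (simp add: bil_metric_g Qop_nth)
  have D_eq: "bil (metric_g A B) p x (Qop (Qop x)) = ?D"
    by (simp add: bil_tmetric)
  have "?S \<ge> 0" "\<bar>?D\<bar> \<le> ?S"
    unfolding bil_tmetric bil_metric_g using assms
    by (auto simp: Qop_nth abs_le_iff algebra_simps)
  then have "\<bar>?D / ?S\<bar> \<le> 1"
    by (cases "?S = 0") (simp_all add: abs_divide)
  then show ?thesis
    unfolding g_angle_def S_Qop2 D_eq using \<open>?S \<ge> 0\<close>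
    by (simp add: cos_arccos_abs flip: power2_eq_square)
qed

lemma rfun_tmetric_metric_g:
  assumes pos: "A p > 0" "B p > 0"
    and ricci: "\<And>y z. ricci (tmetric (metric_g A B)) p y z
      = \<alpha> * (y $ 0 * z $ 0 + y $ 1 * z $ 1) + \<gamma> * (y $ 2 * z $ 2)"
    and "bil (tmetric (metric_g A B)) p x x \<noteq> 0"
  shows "rfun (tmetric (metric_g A B)) p x =
      1 / (8 * cos (g_angle (metric_g A B) p x (Qop (Qop x))))
        * (3 * scal_star (tmetric (metric_g A B)) (metric_g A B) p + scal (tmetric (metric_g A B)) p)
      + 1 / 8 * (3 * scal (tmetric (metric_g A B)) p + scal_star (tmetric (metric_g A B)) (metric_g A B) p)"
proof -
  let ?g = "metric_g A B" and ?tg = "tmetric (metric_g A B)" and ?A' = "\<lambda>q. - A q"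
  define s where "s = (x $ 0)\<^sup>2 + (x $ 1)\<^sup>2"
  define c where "c = (x $ 2)\<^sup>2"
  have nz: "A p \<noteq> 0" "?A' p \<noteq> 0" "B p \<noteq> 0" using pos by auto
  note ricci' = ricci[unfolded tmetric_metric_g]
  have "scal ?tg p = scal_star (metric_g ?A' B) (metric_g ?A' B) p"
    by (simp add: scal_eq_scal_star tmetric_metric_g)
  also have "\<dots> = - 2 * \<alpha> / A p + \<gamma> / B p"
    using scal_star_metric_g[where A = ?A' and B = B and p = p, OF nz(2,3) ricci'] by simp
  finally have scal: "scal ?tg p = - 2 * \<alpha> / A p + \<gamma> / B p" .
  have scal_star: "scal_star ?tg ?g p = 2 * \<alpha> / A p + \<gamma> / B p"
    by (rule scal_star_metric_g[where A = A and B = B and p = p, OF nz(1,3) ricci])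
  have bil_tg: "bil ?tg p x x = - A p * s + B p * c"
    unfolding tmetric_metric_g bil_metric_g s_def c_def by (simp add: power2_eq_square)
  have bil_g: "bil ?g p x x = A p * s + B p * c"
    unfolding bil_metric_g s_def c_def by (simp add: power2_eq_square)
  have r: "rfun ?tg p x = (\<alpha> * s + \<gamma> * c) / (- A p * s + B p * c)"
    unfolding tmetric_metric_g rfun_metric_g[OF ricci'] s_def c_def by simp
  show ?thesis
    unfolding cos_g_angle_Qop2[where A = A and B = B and p = p, OF pos] scal scal_star r bil_tg bil_g
    using nz(1,3) assms(4)[unfolded bil_tg] by (simp add: field_simps)
qed

theorem proposition5p8:
  fixes U :: "(real^3) set" and A B :: "real^3 \<Rightarrow> real" and p x :: "real^3"
  assumes "open U"
    and "\<forall>q\<in>U. A q > 0" and "\<forall>q\<in>U. B q > 0"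
    and "smooth_on U A" and "smooth_on U B"
    and "\<forall>q\<in>U. \<forall>i j k l. Riem (metric_g A B) q i j k l = 0"
    and "p \<in> U"
    and "Q_basis x"
    and "g_angle (metric_g A B) p x (Qop (Qop x)) \<noteq> pi / 2"
  shows "rfun (tmetric (metric_g A B)) p x = rfun (tmetric (metric_g A B)) p (Qop x)
    \<and> rfun (tmetric (metric_g A B)) p (Qop x) = rfun (tmetric (metric_g A B)) p (Qop (Qop x))
    \<and> rfun (tmetric (metric_g A B)) p (Qop (Qop x)) = rfun (tmetric (metric_g A B)) p (Qop (Qop (Qop x)))
    \<and> rfun (tmetric (metric_g A B)) p (Qop (Qop (Qop x))) =
        1 / (8 * cos (g_angle (metric_g A B) p x (Qop (Qop x))))
          * (3 * scal_star (tmetric (metric_g A B)) (metric_g A B) p + scal (tmetric (metric_g A B)) p)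
        + 1 / 8 * (3 * scal (tmetric (metric_g A B)) p + scal_star (tmetric (metric_g A B)) (metric_g A B) p)"
proof -
  let ?g = "metric_g A B" and ?tg = "tmetric (metric_g A B)"
  have nz: "\<forall>q\<in>U. A q \<noteq> 0 \<and> B q \<noteq> 0" and pos: "A p > 0" "B p > 0"
    using assms(2,3,7) by auto
  define \<alpha> where "\<alpha> = ricci_comp ?tg p 0 0"
  define \<gamma> where "\<gamma> = ricci_comp ?tg p 2 2"
  have ricci: "ricci ?tg p y z = \<alpha> * (y $ 0 * z $ 0 + y $ 1 * z $ 1) + \<gamma> * (y $ 2 * z $ 2)" for y z
    unfolding \<alpha>_def \<gamma>_def using ricci_tmetric_metric_g[OF assms(1,7) nz assms(4,5)] assms(6,7) by blast
  have r_Qop: "rfun ?tg p (Qop y) = rfun ?tg p y" for y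
    using rfun_metric_g_Qop[OF ricci[unfolded tmetric_metric_g]] by (simp add: tmetric_metric_g)
  have "bil ?tg p x x \<noteq> 0"
    using bil_ne_zero_if_g_angle_ne_pi_half[OF assms(9)] by (simp add: bil_tmetric)
  with rfun_tmetric_metric_g[OF pos ricci] show ?thesis
    by (simp add: r_Qop)
qed

end
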